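(* In the algebraic decision tree model, any algorithm that finds the elimination order of a set of $n$ growing disks in the plane, or of a set of $n$ growing squares in the plane, requires $\Omega(n\log n)$ time.
   Context: Growing prioritized disks: centers $p_1,\dots,p_n\in\mathbb{R}^2$ and growth rates $v_1,\dots,v_n>0$; at time $t\ge0$ disk $D_i$ is centered at $p_i$ with radius $tv_i$ (for squares: the axis-aligned square centered at $p_i$ with edge length $2v_it$). Smaller index means higher priority; $t(i,j)$ is the time at which objects $i$ and $j$ would first touch (for disks $|p_ip_j|/(v_i+v_j)$). Whenever objects $i<j$ touch at time $t(i,j)$ and neither has been removed before, object $j$ is removed at that time and object $i$ keeps growing. The elimination order is the sequence of objects sorted by the times at which they are removed (object $1$ is never removed). *)

theory Defs
  imports Complex_Main
begin

datatype pexpr = PConst real | PVar nat | PAdd pexpr pexpr | PMul pexpr pexpr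

fun peval :: "pexpr \<Rightarrow> (nat \<Rightarrow> real) \<Rightarrow> real" where
  "peval (PConst c) z = c"
| "peval (PVar k) z = z k"
| "peval (PAdd p q) z = peval p z + peval q z"
| "peval (PMul p q) z = peval p z * peval q z"

fun pdeg :: "pexpr \<Rightarrow> nat" where
  "pdeg (PConst c) = 0"
| "pdeg (PVar k) = 1"
| "pdeg (PAdd p q) = max (pdeg p) (pdeg q)"
| "pdeg (PMul p q) = pdeg p + pdeg q"

datatype 'a adt = Leaf 'a | Node pexpr "'a adt" "'a adt" "'a adt"

fun adt_eval :: "'a adt \<Rightarrow> (nat \<Rightarrow> real) \<Rightarrow> 'a" where
  "adt_eval (Leaf a) z = a"
| "adt_eval (Node p tn tz tp) z =
     (if peval p z < 0 then adt_eval tn z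
      else if peval p z = 0 then adt_eval tz z else adt_eval tp z)"

fun adt_depth :: "'a adt \<Rightarrow> nat" where
  "adt_depth (Leaf a) = 0"
| "adt_depth (Node p tn tz tp) = 1 + max (adt_depth tn) (max (adt_depth tz) (adt_depth tp))"

fun adt_degree :: "'a adt \<Rightarrow> nat" where
  "adt_degree (Leaf a) = 0"
| "adt_degree (Node p tn tz tp) = max (pdeg p) (max (adt_degree tn) (max (adt_degree tz) (adt_degree tp)))"

text \<open>An input of n objects is encoded as z :: nat \<Rightarrow> real; object i (0-based,
  smaller index = higher priority) has center (z (3i), z (3i+1)) and growth rate z (3i+2).\<close>
definition cx :: "(nat \<Rightarrow> real) \<Rightarrow> nat \<Rightarrow> real" where "cx z i = z (3*i)"
definition cy :: "(nat \<Rightarrow> real) \<Rightarrow> nat \<Rightarrow> real" where "cy z i = z (3*i+1)"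
definition rate :: "(nat \<Rightarrow> real) \<Rightarrow> nat \<Rightarrow> real" where "rate z i = z (3*i+2)"

text \<open>Touching times: disks (Euclidean distance) and axis-aligned squares (edge
  length 2 v t, i.e. Chebyshev distance).\<close>
definition disk_time :: "(nat \<Rightarrow> real) \<Rightarrow> nat \<Rightarrow> nat \<Rightarrow> real" where
  "disk_time z i j = sqrt ((cx z i - cx z j)^2 + (cy z i - cy z j)^2) / (rate z i + rate z j)"

definition square_time :: "(nat \<Rightarrow> real) \<Rightarrow> nat \<Rightarrow> nat \<Rightarrow> real" where
  "square_time z i j = max \<bar>cx z i - cx z j\<bar> \<bar>cy z i - cy z j\<bar> / (rate z i + rate z j)"

text \<open>Event simulation: among the currently alive objects, the pair i < j with the
  smallest touching time touches next (all other alive pairs touch later); object j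
  is removed.  The fuel argument counts the remaining removals.\<close>
fun elim :: "nat \<Rightarrow> (nat \<Rightarrow> nat \<Rightarrow> real) \<Rightarrow> nat set \<Rightarrow> nat list" where
  "elim 0 tm A = []"
| "elim (Suc k) tm A =
     (let ij = ARG_MIN (\<lambda>(i, j). tm i j) ij. (fst ij \<in> A \<and> snd ij \<in> A \<and> fst ij < snd ij)
      in snd ij # elim k tm (A - {snd ij}))"

text \<open>Elimination order of objects 0..n-1 (object 0 is never removed).\<close>
definition elim_order :: "(nat \<Rightarrow> nat \<Rightarrow> real) \<Rightarrow> nat \<Rightarrow> nat list" where
  "elim_order tm n = elim (n - 1) tm {..<n}"

text \<open>Admissible inputs: positive growth rates and all touching times pairwise
  distinct (general position, so the elimination order is unambiguous).\<close>
definition admissible :: "((nat \<Rightarrow> real) \<Rightarrow> nat \<Rightarrow> nat \<Rightarrow> real) \<Rightarrow> nat \<Rightarrow> (nat \<Rightarrow> real) \<Rightarrow> bool" where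
  "admissible tf n z \<longleftrightarrow> (\<forall>i<n. rate z i > 0) \<and>
     inj_on (\<lambda>(i, j). tf z i j) {(i, j). i < j \<and> j < n}"

definition solves_elim :: "((nat \<Rightarrow> real) \<Rightarrow> nat \<Rightarrow> nat \<Rightarrow> real) \<Rightarrow> nat \<Rightarrow> nat list adt \<Rightarrow> bool" where
  "solves_elim tf n T \<longleftrightarrow> (\<forall>z. admissible tf n z \<longrightarrow> adt_eval T z = elim_order (tf z) n)"

end

theory Submission
  imports Defs "HOL-Combinatorics.Permutations"
begin

text \<open>A decision tree of depth D has at most 3^D leaves, hence at most 3^D distinct outputs.
  Put object 0 at the origin with rate 1 and, for a permutation \<sigma> of the other objects,
  object i at (2^(\<sigma> i), 0) with rate 2^-n. Object 0 swallows the others in increasing order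
  of \<sigma> before any two of them meet, because distinct powers of two are at least 2 apart;
  and differences of powers of two determine the pair, so all touching times are distinct.
  Both disks and squares thus realise all (n-1)! elimination orders, and
  D \<ge> log_3 (n-1)! = \<Omega>(n log n). Since the output alone takes (n-1)! values, the
  bound on the degree of the tests is never needed.\<close>

lemma finite_range_adt_eval: "finite (range (adt_eval T))"
  and card_range_adt_eval_le: "card (range (adt_eval T)) \<le> 3 ^ adt_depth T"
proof (induction T)
  case (Node p tn tz tp)
  let ?D = "max (adt_depth tn) (max (adt_depth tz) (adt_depth tp))"
  have sub: "range (adt_eval (Node p tn tz tp))
      \<subseteq> range (adt_eval tn) \<union> range (adt_eval tz) \<union> range (adt_eval tp)"
    by auto
  then show "finite (range (adt_eval (Node p tn tz tp)))"
    using Node.IH(1,3,5) by (meson finite_Un finite_subset)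
  have le: "card (range (adt_eval t)) \<le> 3 ^ ?D"
    if "card (range (adt_eval t)) \<le> 3 ^ adt_depth t" "adt_depth t \<le> ?D" for t :: "'a adt"
    using that(1) power_increasing[OF that(2), of "3::nat"] by linarith
  have "card (range (adt_eval (Node p tn tz tp)))
      \<le> card (range (adt_eval tn) \<union> range (adt_eval tz) \<union> range (adt_eval tp))"
    using Node.IH(1,3,5) by (intro card_mono[OF _ sub]) auto
  also have "\<dots> \<le> card (range (adt_eval tn)) + card (range (adt_eval tz)) + card (range (adt_eval tp))"
    by (meson add_right_mono card_Un_le order_trans)
  also have "\<dots> \<le> 3 * 3 ^ ?D"
    using le[OF Node.IH(2)] le[OF Node.IH(4)] le[OF Node.IH(6)] by (simp add: le_max_iff_disj)
  finally show "card (range (adt_eval (Node p tn tz tp))) \<le> 3 ^ adt_depth (Node p tn tz tp)"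
    by simp
qed simp_all

lemma ln_fact_ge: "real m * ln (real m) - real m \<le> ln (fact m)"
proof (cases "m = 0")
  case False
  have "(\<Sum>k\<in>{m}. real m ^ k /\<^sub>R fact k) \<le> (\<Sum>k. real m ^ k /\<^sub>R fact k)"
    using summable_exp_generic[of "real m"] by (intro sum_le_suminf) auto
  then have "real m ^ m / fact m \<le> exp (real m)"
    by (simp add: exp_def divide_inverse mult.commute)
  then have "real m ^ m \<le> exp (real m) * fact m"
    by (simp add: divide_le_eq)
  then have "ln (real m ^ m) \<le> ln (exp (real m) * fact m)"
    using False by (subst ln_le_cancel_iff) auto
  then show ?thesis using False by (simp add: ln_mult ln_realpow)
qed simp

lemma nlnn_le_of_fact_le_pow3:
  assumes "100 \<le> n" and "fact (n - 1) \<le> (3::nat) ^ D"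
  shows "1 / (8 * ln 3) * real n * ln (real n) \<le> real D"
proof -
  define m where "m = n - 1"
  have m: "99 \<le> m" "real n = real m + 1" using assms(1) unfolding m_def by auto
  have "exp (4::real) = exp 1 ^ 4" by (simp flip: exp_of_nat_mult)
  also have "\<dots> \<le> 3 ^ 4" using exp_le by (intro power_mono) auto
  also have "\<dots> \<le> real m" using m by simp
  finally have ln_m_ge_4: "4 \<le> ln (real m)" using m by (simp add: ln_ge_iff)
  have "ln (real n) \<le> ln (2 * real m)" using m by (subst ln_le_cancel_iff) auto
  also have "\<dots> = ln 2 + ln (real m)" using m by (simp add: ln_mult)
  also have "\<dots> \<le> 2 * ln (real m)" using m by simp
  finally have "real n * ln (real n) \<le> (2 * real m) * (2 * ln (real m))"
    using m by (intro mult_mono) auto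
  moreover have "ln (fact m :: real) \<le> real D * ln 3"
  proof -
    have "real (fact m) \<le> real (3 ^ D)" using assms(2) unfolding m_def by (simp only: of_nat_le_iff)
    then have "ln (real (fact m)) \<le> ln (real (3 ^ D))"
      by (subst ln_le_cancel_iff) (auto simp: fact_gt_zero)
    then show ?thesis by (simp add: ln_realpow)
  qed
  moreover have "real m \<le> real m * ln (real m) / 4" using ln_m_ge_4 m by simp
  ultimately have "real n * ln (real n) / 8 \<le> real D * ln 3"
    using ln_fact_ge[of m] by linarith
  then show ?thesis by (simp add: field_simps)
qed

lemma abs_power2_diff: "\<bar>(2::real) ^ a - 2 ^ b\<bar> = 2 ^ max a b - 2 ^ min a b"
  by (cases "a \<le> b") (auto simp: max_def min_def)

lemma power2_diff_ge: "b < a \<Longrightarrow> (2::real) ^ (a - 1) \<le> 2 ^ a - 2 ^ b"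
  by (cases a) (auto intro: power_increasing)

lemma power2_diff_less:
  assumes "d < c" "a < c" shows "(2::real) ^ a - 2 ^ b < 2 ^ c - 2 ^ d"
proof -
  have "(2::real) ^ a - 2 ^ b < 2 ^ (c - 1)"
    using assms(2) power_increasing[of a "c - 1" "2::real"] by (simp add: less_le_trans[of _ "2 ^ a"])
  then show ?thesis using power2_diff_ge[OF assms(1)] by linarith
qed

lemma power2_diff_eq_iff:
  assumes "b < a" "d < c"
  shows "(2::real) ^ a - 2 ^ b = 2 ^ c - 2 ^ d \<longleftrightarrow> a = c \<and> b = d"
proof
  assume eq: "(2::real) ^ a - 2 ^ b = 2 ^ c - 2 ^ d"
  have "a = c"
    using power2_diff_less[OF assms(2), of a b] power2_diff_less[OF assms(1), of c d] eq
    by (cases a c rule: linorder_cases) auto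
  with eq show "a = c \<and> b = d" by simp
qed simp

lemma abs_power2_diff_eq_imp:
  assumes "a \<noteq> b" "c \<noteq> d" "\<bar>(2::real) ^ a - 2 ^ b\<bar> = \<bar>2 ^ c - 2 ^ d\<bar>"
  shows "max a b = max c d \<and> min a b = min c d"
proof -
  have "min a b < max a b" "min c d < max c d" using assms(1,2) by (auto simp: min_def max_def)
  then show ?thesis using assms(3) power2_diff_eq_iff by (simp add: abs_power2_diff)
qed

lemma abs_power2_diff_ge_2:
  assumes "a \<noteq> b" "1 \<le> a" "1 \<le> b" shows "2 \<le> \<bar>(2::real) ^ a - 2 ^ b\<bar>"
proof -
  have "(2::real) \<le> 2 ^ (max a b - 1)"
    using assms power_increasing[of 1 "max a b - 1" "2::real"] by simp
  moreover have "min a b < max a b" using assms(1) by (auto simp: min_def max_def)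
  ultimately show ?thesis using power2_diff_ge[of "min a b" "max a b"] by (simp add: abs_power2_diff)
qed

lemma arg_min_eq_if_strict_min:
  fixes f :: "'a \<Rightarrow> 'b::linorder"
  assumes "P k" "\<And>x. P x \<Longrightarrow> x \<noteq> k \<Longrightarrow> f k < f x"
  shows "arg_min f P = k"
  by (rule arg_minI[of P k]) (use assms in \<open>force+\<close>)

lemma elim_root_first:
  fixes tm :: "nat \<Rightarrow> nat \<Rightarrow> real"
  assumes "sorted_wrt (\<lambda>j j'. tm 0 j < tm 0 j') js" "0 \<notin> set js"
    and "\<And>i j j'. i \<in> set js \<Longrightarrow> j \<in> set js \<Longrightarrow> j' \<in> set js \<Longrightarrow> i < j \<Longrightarrow> tm 0 j' < tm i j"
  shows "elim (length js) tm (insert 0 (set js)) = js"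
  using assms
proof (induction js)
  case (Cons j js)
  let ?A = "insert 0 (set (j # js))"
  have j: "0 < j" "j \<notin> set js" using Cons.prems(1,2) by auto
  have "arg_min (\<lambda>(i, j). tm i j) (\<lambda>ij. fst ij \<in> ?A \<and> snd ij \<in> ?A \<and> fst ij < snd ij) = (0, j)"
  proof (rule arg_min_eq_if_strict_min, simp add: j)
    fix ij :: "nat \<times> nat"
    assume "fst ij \<in> ?A \<and> snd ij \<in> ?A \<and> fst ij < snd ij" "ij \<noteq> (0, j)"
    moreover obtain i j' where "ij = (i, j')" by fastforce
    ultimately have ij: "i \<in> ?A" "j' \<in> set (j # js)" "i < j'" "(i, j') \<noteq> (0, j)" by auto
    show "(case (0, j) of (i, j) \<Rightarrow> tm i j) < (case ij of (i, j) \<Rightarrow> tm i j)"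
    proof (cases "i = 0")
      case True
      then show ?thesis using ij Cons.prems(1) \<open>ij = (i, j')\<close> by auto
    next
      case False
      then show ?thesis using ij Cons.prems(3)[of i j' j] \<open>ij = (i, j')\<close> by auto
    qed
  qed
  moreover have "?A - {j} = insert 0 (set js)" using j by auto
  ultimately show ?case using Cons by (simp add: Let_def)
qed simp

definition input_of :: "(nat \<Rightarrow> real) \<Rightarrow> (nat \<Rightarrow> real) \<Rightarrow> (nat \<Rightarrow> real) \<Rightarrow> nat \<Rightarrow> real" where
  "input_of x y v k =
     (if k mod 3 = 0 then x (k div 3) else if k mod 3 = 1 then y (k div 3) else v (k div 3))"

lemma cx_input_of [simp]: "cx (input_of x y v) i = x i"
  and cy_input_of [simp]: "cy (input_of x y v) i = y i"
  and rate_input_of [simp]: "rate (input_of x y v) i = v i"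
proof -
  have "(3 * i + 1) mod 3 = 1" "(3 * i + 1) div 3 = i" "(3 * i + 2) mod 3 = 2" "(3 * i + 2) div 3 = i"
    by presburger+
  then show "cx (input_of x y v) i = x i" "cy (input_of x y v) i = y i"
    "rate (input_of x y v) i = v i"
    unfolding cx_def cy_def rate_def input_of_def by simp_all
qed

definition line_time :: "(nat \<Rightarrow> real) \<Rightarrow> (nat \<Rightarrow> real) \<Rightarrow> nat \<Rightarrow> nat \<Rightarrow> real" where
  "line_time x v i j = \<bar>x i - x j\<bar> / (v i + v j)"

lemma disk_time_on_line: "disk_time (input_of x (\<lambda>_. 0) v) = line_time x v"
  unfolding disk_time_def line_time_def fun_eq_iff by simp

lemma square_time_on_line: "square_time (input_of x (\<lambda>_. 0) v) = line_time x v"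
  unfolding square_time_def line_time_def fun_eq_iff by simp

definition sort_center :: "(nat \<Rightarrow> nat) \<Rightarrow> nat \<Rightarrow> real" where
  "sort_center \<sigma> i = (if i = 0 then 0 else 2 ^ \<sigma> i)"

definition sort_rate :: "nat \<Rightarrow> nat \<Rightarrow> real" where
  "sort_rate n i = (if i = 0 then 1 else 1 / 2 ^ n)"

definition sort_time :: "nat \<Rightarrow> (nat \<Rightarrow> nat) \<Rightarrow> nat \<Rightarrow> nat \<Rightarrow> real" where
  "sort_time n \<sigma> = line_time (sort_center \<sigma>) (sort_rate n)"

context
  fixes n :: nat and \<sigma> :: "nat \<Rightarrow> nat"
  assumes perm: "\<sigma> permutes {1..<n}"
begin

lemma sort_time_root: "j \<in> {1..<n} \<Longrightarrow> sort_time n \<sigma> 0 j = 2 ^ \<sigma> j / (1 + 1 / 2 ^ n)"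
  unfolding sort_time_def line_time_def sort_center_def sort_rate_def by simp

lemma sort_time_root_less: "j \<in> {1..<n} \<Longrightarrow> sort_time n \<sigma> 0 j < 2 ^ n"
proof -
  assume j: "j \<in> {1..<n}"
  then have "\<sigma> j < n" using permutes_in_image[OF perm, of j] by auto
  then have "(2::real) ^ \<sigma> j < 2 ^ n" by simp
  moreover have "(2::real) ^ \<sigma> j / (1 + 1 / 2 ^ n) \<le> 2 ^ \<sigma> j"
    by (simp add: divide_le_eq add_pos_pos)
  ultimately show ?thesis using sort_time_root[OF j] by linarith
qed

lemma sort_time_pair:
  assumes "i \<in> {1..<n}" "j \<in> {1..<n}" "i \<noteq> j"
  shows "sort_time n \<sigma> i j = \<bar>(2::real) ^ \<sigma> i - 2 ^ \<sigma> j\<bar> * 2 ^ n / 2"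
  using assms unfolding sort_time_def line_time_def sort_center_def sort_rate_def by simp

lemma sort_time_pair_ge:
  assumes "i \<in> {1..<n}" "j \<in> {1..<n}" "i \<noteq> j"
  shows "2 ^ n \<le> sort_time n \<sigma> i j"
proof -
  have "\<sigma> i \<noteq> \<sigma> j" "1 \<le> \<sigma> i" "1 \<le> \<sigma> j"
    using assms permutes_inj[OF perm] permutes_in_image[OF perm] by (auto dest: injD)
  then have "2 \<le> \<bar>(2::real) ^ \<sigma> i - 2 ^ \<sigma> j\<bar>" by (rule abs_power2_diff_ge_2)
  then show ?thesis unfolding sort_time_pair[OF assms] by simp
qed

lemma sort_time_inj: "inj_on (\<lambda>(i, j). sort_time n \<sigma> i j) {(i, j). i < j \<and> j < n}"
proof (rule inj_onI, clarsimp)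
  fix i j i' j' assume ij: "i < j" "j < n" "i' < j'" "j' < n"
    and eq: "sort_time n \<sigma> i j = sort_time n \<sigma> i' j'"
  have j: "j \<in> {1..<n}" "j' \<in> {1..<n}" using ij by auto
  have inj: "inj \<sigma>" using permutes_inj[OF perm] .
  consider "i = 0" "i' = 0" | "i = 0" "i' \<noteq> 0" | "i \<noteq> 0" "i' = 0" | "i \<noteq> 0" "i' \<noteq> 0"
    by blast
  then show "i = i' \<and> j = j'"
  proof cases
    case 1
    have "(0::real) < 1 + 1 / 2 ^ n" by (simp add: add_pos_pos)
    then have "\<sigma> j = \<sigma> j'"
      using 1 eq sort_time_root[OF j(1)] sort_time_root[OF j(2)] by simp
    then show ?thesis using 1 inj by (simp add: injD)
  next
    case 2
    then show ?thesis using eq ij sort_time_pair_ge[of i' j'] sort_time_root_less[OF j(1)] by auto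
  next
    case 3
    then show ?thesis using eq ij sort_time_pair_ge[of i j] sort_time_root_less[OF j(2)] by auto
  next
    case 4
    then have "\<bar>(2::real) ^ \<sigma> i - 2 ^ \<sigma> j\<bar> = \<bar>2 ^ \<sigma> i' - 2 ^ \<sigma> j'\<bar>"
      using eq ij sort_time_pair[of i j] sort_time_pair[of i' j'] by auto
    moreover have "\<sigma> i \<noteq> \<sigma> j" "\<sigma> i' \<noteq> \<sigma> j'" using ij inj by (auto dest: injD)
    ultimately have "max (\<sigma> i) (\<sigma> j) = max (\<sigma> i') (\<sigma> j') \<and> min (\<sigma> i) (\<sigma> j) = min (\<sigma> i') (\<sigma> j')"
      using abs_power2_diff_eq_imp by blast
    then have "(\<sigma> i = \<sigma> i' \<and> \<sigma> j = \<sigma> j') \<or> (\<sigma> i = \<sigma> j' \<and> \<sigma> j = \<sigma> i')"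
      by (auto simp: max_def min_def split: if_splits)
    then have "(i = i' \<and> j = j') \<or> (i = j' \<and> j = i')" using inj by (simp add: inj_eq)
    then show ?thesis using ij by auto
  qed
qed

lemma elim_order_sort_time: "1 \<le> n \<Longrightarrow> elim_order (sort_time n \<sigma>) n = map (inv \<sigma>) [1..<n]"
proof -
  assume n: "1 \<le> n"
  let ?js = "map (inv \<sigma>) [1..<n]"
  have set_js: "set ?js = {1..<n}" using permutes_image[OF permutes_inv[OF perm]] by simp
  have sorted: "sorted_wrt (\<lambda>l l'. sort_time n \<sigma> 0 (inv \<sigma> l) < sort_time n \<sigma> 0 (inv \<sigma> l')) [1..<n]"
  proof (rule sorted_wrt_mono_rel[OF _ sorted_wrt_upt])
    fix l l' :: nat assume "l \<in> set [1..<n]" "l' \<in> set [1..<n]" "l < l'"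
    moreover have "inv \<sigma> l \<in> {1..<n}" "inv \<sigma> l' \<in> {1..<n}" using set_js calculation by auto
    ultimately show "sort_time n \<sigma> 0 (inv \<sigma> l) < sort_time n \<sigma> 0 (inv \<sigma> l')"
      using sort_time_root permutes_inverses(1)[OF perm] by (simp add: divide_strict_right_mono add_pos_pos)
  qed
  have "elim (length ?js) (sort_time n \<sigma>) (insert 0 (set ?js)) = ?js"
  proof (rule elim_root_first)
    show "sorted_wrt (\<lambda>j j'. sort_time n \<sigma> 0 j < sort_time n \<sigma> 0 j') ?js"
      using sorted by (simp add: sorted_wrt_map)
  next
    fix i j j' assume "i \<in> set ?js" "j \<in> set ?js" "j' \<in> set ?js" "i < j"
    then show "sort_time n \<sigma> 0 j' < sort_time n \<sigma> i j"
      using sort_time_root_less[of j'] sort_time_pair_ge[of i j] set_js by fastforce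
  qed (use set_js in simp)
  moreover have "insert 0 (set ?js) = {..<n}" using n set_js by auto
  ultimately show ?thesis unfolding elim_order_def by simp
qed

end

lemma inj_on_map_inv_permutes: "inj_on (\<lambda>\<sigma>. map (inv \<sigma>) [1..<n]) {\<sigma>. \<sigma> permutes {1..<n}}"
proof (rule inj_onI)
  fix \<sigma> \<tau> assume "\<sigma> \<in> {\<sigma>. \<sigma> permutes {1..<n}}" "\<tau> \<in> {\<sigma>. \<sigma> permutes {1..<n}}"
    and "map (inv \<sigma>) [1..<n] = map (inv \<tau>) [1..<n]"
  then have perms: "\<sigma> permutes {1..<n}" "\<tau> permutes {1..<n}"
    and on_range: "\<forall>x\<in>{1..<n}. inv \<sigma> x = inv \<tau> x"
    by (simp_all add: map_eq_conv)
  then have "inv \<sigma> x = inv \<tau> x" for x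
    using permutes_not_in[OF permutes_inv[OF perms(1)]] permutes_not_in[OF permutes_inv[OF perms(2)]]
    by (cases "x \<in> {1..<n}") (use on_range in auto)
  then have "inv \<sigma> = inv \<tau>" ..
  then show "\<sigma> = \<tau>" by (metis permutes_inv_inv[OF perms(1)] permutes_inv_inv[OF perms(2)])
qed

lemma fact_le_3_pow_depth:
  assumes n: "1 \<le> n" and on_line: "\<And>x v. tf (input_of x (\<lambda>_. 0) v) = line_time x v"
    and T: "solves_elim tf n T"
  shows "fact (n - 1) \<le> (3::nat) ^ adt_depth T"
proof -
  let ?P = "{\<sigma>. \<sigma> permutes {1..<n}}"
  let ?order = "\<lambda>\<sigma>. map (inv \<sigma>) [1..<n]"
  have "?order \<sigma> \<in> range (adt_eval T)" if \<sigma>: "\<sigma> permutes {1..<n}" for \<sigma>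
  proof -
    let ?z = "input_of (sort_center \<sigma>) (\<lambda>_. 0) (sort_rate n)"
    have "admissible tf n ?z"
      using sort_time_inj[OF \<sigma>] by (simp add: admissible_def on_line sort_time_def sort_rate_def)
    then have "adt_eval T ?z = ?order \<sigma>"
      using T elim_order_sort_time[OF \<sigma> n] by (simp add: solves_elim_def on_line sort_time_def)
    then show ?thesis using rangeI[of "adt_eval T" ?z] by simp
  qed
  then have "card (?order ` ?P) \<le> card (range (adt_eval T))"
    by (intro card_mono[OF finite_range_adt_eval] image_subsetI) simp
  moreover have "card (?order ` ?P) = fact (n - 1)"
    using card_image[OF inj_on_map_inv_permutes] card_permutations[of "{1..<n}" "n - 1"] by simp
  ultimately show ?thesis using card_range_adt_eval_le[of T] by linarith
qed

theorem theorem19: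
  shows "(\<forall>d::nat. \<exists>c>0. \<exists>N::nat. \<forall>n\<ge>N. \<forall>T::nat list adt.
            adt_degree T \<le> d \<longrightarrow> solves_elim disk_time n T \<longrightarrow>
            real (adt_depth T) \<ge> c * real n * ln (real n)) \<and>
         (\<forall>d::nat. \<exists>c>0. \<exists>N::nat. \<forall>n\<ge>N. \<forall>T::nat list adt.
            adt_degree T \<le> d \<longrightarrow> solves_elim square_time n T \<longrightarrow>
            real (adt_depth T) \<ge> c * real n * ln (real n))"
proof -
  have bound: "\<forall>d::nat. \<exists>c>0. \<exists>N::nat. \<forall>n\<ge>N. \<forall>T::nat list adt.
          adt_degree T \<le> d \<longrightarrow> solves_elim tf n T \<longrightarrow>
          real (adt_depth T) \<ge> c * real n * ln (real n)"
    if "\<And>x v. tf (input_of x (\<lambda>_. 0) v) = line_time x v" for tf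
  proof (intro allI exI[of _ "1 / (8 * ln 3)"] conjI exI[of _ "100::nat"] impI)
    fix n :: nat and T :: "nat list adt"
    assume n: "100 \<le> n" and T: "solves_elim tf n T"
    have "fact (n - 1) \<le> (3::nat) ^ adt_depth T"
      using n by (intro fact_le_3_pow_depth[OF _ that T]) simp
    then show "1 / (8 * ln 3) * real n * ln (real n) \<le> real (adt_depth T)"
      by (rule nlnn_le_of_fact_le_pow3[OF n])
  qed simp
  show ?thesis using bound[OF disk_time_on_line] bound[OF square_time_on_line] by (rule conjI)
qed

end
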